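(* For all finite multisets $\Gamma,\Delta$ of formulas: $\mathsf{G}(\mathbf{KT}_D)\vdash\Gamma\Rightarrow\Delta$ if and only if $\mathsf{G}(\mathbf{KT}^+_D)\vdash\emptyset\mid\Gamma\Rightarrow\Delta$.
   Context: Language: fix a finite nonempty set $\mathsf{Agt}$ of agents and a countable set $\mathsf{Prop}$ of propositional variables; $\mathsf{Grp}$ is the set of nonempty subsets of $\mathsf{Agt}$. Formulas: $\alpha::=p\mid\bot\mid\alpha\wedge\alpha\mid\alpha\vee\alpha\mid\alpha\rightarrow\alpha\mid\neg\alpha\mid D_G\alpha$ ($p\in\mathsf{Prop}$, $G\in\mathsf{Grp}$). Outmost-boxed formula: one of the form $D_G\gamma$. Derivable = root of a finite tree built from initial sequents by the rules of the calculus. Calculus $\mathsf{G}(\mathbf{KT}_D)$ on sequents $\Gamma\Rightarrow\Delta$ (pairs of finite multisets): initial sequents $\Gamma,p\Rightarrow p,\Delta$ and $\bot,\Gamma\Rightarrow\Delta$; rules $(R\wedge)$ from $\Gamma\Rightarrow\Delta,\alpha_1$ and $\Gamma\Rightarrow\Delta,\alpha_2$ infer $\Gamma\Rightarrow\Delta,\alpha_1\wedge\alpha_2$; $(L\wedge)$ from $\alpha_1,\alpha_2,\Gamma\Rightarrow\Delta$ infer $\alpha_1\wedge\alpha_2,\Gamma\Rightarrow\Delta$; $(R\vee)$ from $\Gamma\Rightarrow\Delta,\alpha_1,\alpha_2$ infer $\Gamma\Rightarrow\Delta,\alpha_1\vee\alpha_2$; $(L\vee)$ from $\alpha_1,\Gamma\Rightarrow\Delta$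 and $\alpha_2,\Gamma\Rightarrow\Delta$ infer $\alpha_1\vee\alpha_2,\Gamma\Rightarrow\Delta$; $(R\rightarrow)$ from $\alpha_1,\Gamma\Rightarrow\Delta,\alpha_2$ infer $\Gamma\Rightarrow\Delta,\alpha_1\rightarrow\alpha_2$; $(L\rightarrow)$ from $\Gamma\Rightarrow\Delta,\alpha_1$ and $\alpha_2,\Gamma\Rightarrow\Delta$ infer $\alpha_1\rightarrow\alpha_2,\Gamma\Rightarrow\Delta$; $(R\neg)$ from $\alpha,\Gamma\Rightarrow\Delta$ infer $\Gamma\Rightarrow\Delta,\neg\alpha$; $(L\neg)$ from $\Gamma\Rightarrow\Delta,\alpha$ infer $\neg\alpha,\Gamma\Rightarrow\Delta$; $(D_K)$: from $\alpha_1,\dots,\alpha_n\Rightarrow\beta$ ($n\ge0$) infer $\Sigma,D_{G_1}\alpha_1,\dots,D_{G_n}\alpha_n\Rightarrow D_G\beta,\Omega$ where all $G_i\subseteq G$, $\Sigma$ consists only of propositional variables, $\bot$, and $D_H\gamma$ with $H\not\subseteq G$, and $\Omega$ only of propositional variables, $\bot$, outmost-boxed formulas; $(D_T)$: from $D_G\alpha,\alpha,\Gamma\Rightarrow\Delta$ infer $D_G\alpha,\Gamma\Rightarrow\Delta$. Calculus $\mathsf{G}(\mathbf{KT}^+_D)$ on T-sequents $\Sigma\mid\Gamma\Rightarrow\Delta$ ($\Gamma,\Delta$ finite multisets of formulas, $\Sigma$ a finite multiset of outmost-boxed formulas): initial sequents $\Sigma\mid\Gamma,p\Rightarrow p,\Delta$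 and $\Sigma\mid\bot,\Gamma\Rightarrow\Delta$; the same eight propositional rules acting on $\Gamma,\Delta$ with $\Sigma$ unchanged; $(D_K^+)$: from $\emptyset\mid\alpha_1,\dots,\alpha_n\Rightarrow\beta$ ($n\ge0$) infer $\Sigma,D_{G_1}\alpha_1,\dots,D_{G_n}\alpha_n\mid\Pi\Rightarrow D_G\beta,\Omega$, provided $G_i\subseteq G$, $\Sigma$ consists only of formulas $D_H\gamma$ with $H\not\subseteq G$, $\Pi$ only of propositional variables and $\bot$, $\Omega$ only of propositional variables, $\bot$, outmost-boxed formulas; $(D_T^+)$: from $D_G\alpha,\Sigma\mid\Gamma,\alpha\Rightarrow\Delta$ infer $\Sigma\mid\Gamma,D_G\alpha\Rightarrow\Delta$. *)

theory Defs
  imports Main "HOL-Library.Multiset" "HOL-Library.Countable"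
begin

text \<open>Groups: nonempty sets of agents. Agents form a finite (nonempty) type 'a.\<close>
typedef 'a grp = "{G :: 'a set. G \<noteq> {}}"
  morphisms gset Abs_grp
  by auto

datatype ('a, 'p) fm =
    Atom 'p
  | Bot
  | Conj "('a,'p) fm" "('a,'p) fm"
  | Disj "('a,'p) fm" "('a,'p) fm"
  | Imp "('a,'p) fm" "('a,'p) fm"
  | Neg "('a,'p) fm"
  | Box "'a grp" "('a,'p) fm"

fun is_boxed :: "('a,'p) fm \<Rightarrow> bool" where
  "is_boxed (Box G a) = True"
| "is_boxed _ = False"

fun is_atom_or_bot :: "('a,'p) fm \<Rightarrow> bool" where
  "is_atom_or_bot (Atom p) = True"
| "is_atom_or_bot Bot = True"
| "is_atom_or_bot _ = False"

fun sigma_ok :: "'a grp \<Rightarrow> ('a,'p) fm \<Rightarrow> bool" where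
  "sigma_ok G (Atom p) = True"
| "sigma_ok G Bot = True"
| "sigma_ok G (Box H c) = (\<not> gset H \<subseteq> gset G)"
| "sigma_ok G _ = False"

fun boxed_other :: "'a grp \<Rightarrow> ('a,'p) fm \<Rightarrow> bool" where
  "boxed_other G (Box H c) = (\<not> gset H \<subseteq> gset G)"
| "boxed_other G _ = False"

definition omega_ok :: "('a,'p) fm \<Rightarrow> bool" where
  "omega_ok f \<longleftrightarrow> is_atom_or_bot f \<or> is_boxed f"

text \<open>The calculus G(KT_D). The boxed antecedent formulas D_{G_i} \<alpha>_i of (D_K)
  are given by a list of pairs (G_i, \<alpha>_i).\<close>
inductive gKT :: "('a,'p) fm multiset \<Rightarrow> ('a,'p) fm multiset \<Rightarrow> bool" where
  ax: "gKT (Gm + {#Atom p#}) ({#Atom p#} + Dm)"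
| axBot: "gKT ({#Bot#} + Gm) Dm"
| RConj: "gKT Gm (Dm + {#a1#}) \<Longrightarrow> gKT Gm (Dm + {#a2#}) \<Longrightarrow> gKT Gm (Dm + {#Conj a1 a2#})"
| LConj: "gKT ({#a1, a2#} + Gm) Dm \<Longrightarrow> gKT ({#Conj a1 a2#} + Gm) Dm"
| RDisj: "gKT Gm (Dm + {#a1, a2#}) \<Longrightarrow> gKT Gm (Dm + {#Disj a1 a2#})"
| LDisj: "gKT ({#a1#} + Gm) Dm \<Longrightarrow> gKT ({#a2#} + Gm) Dm \<Longrightarrow> gKT ({#Disj a1 a2#} + Gm) Dm"
| RImp: "gKT ({#a1#} + Gm) (Dm + {#a2#}) \<Longrightarrow> gKT Gm (Dm + {#Imp a1 a2#})"
| LImp: "gKT Gm (Dm + {#a1#}) \<Longrightarrow> gKT ({#a2#} + Gm) Dm \<Longrightarrow> gKT ({#Imp a1 a2#} + Gm) Dm"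
| RNeg: "gKT ({#a#} + Gm) Dm \<Longrightarrow> gKT Gm (Dm + {#Neg a#})"
| LNeg: "gKT Gm (Dm + {#a#}) \<Longrightarrow> gKT ({#Neg a#} + Gm) Dm"
| DK: "gKT (mset (map snd xs)) {#b#} \<Longrightarrow>
       (\<forall>(H, a) \<in> set xs. gset H \<subseteq> gset G) \<Longrightarrow>
       (\<forall>f \<in># Sm. sigma_ok G f) \<Longrightarrow>
       (\<forall>f \<in># Om. omega_ok f) \<Longrightarrow>
       gKT (Sm + mset (map (\<lambda>(H, a). Box H a) xs)) ({#Box G b#} + Om)"
| DT: "gKT ({#Box G a, a#} + Gm) Dm \<Longrightarrow> gKT ({#Box G a#} + Gm) Dm"

text \<open>The calculus G(KT^+_D) on T-sequents \<Sigma> | \<Gamma> \<Rightarrow> \<Delta>, where \<Sigma> consists of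
  outmost-boxed formulas.\<close>
inductive gKTp :: "('a,'p) fm multiset \<Rightarrow> ('a,'p) fm multiset \<Rightarrow> ('a,'p) fm multiset \<Rightarrow> bool" where
  ax: "\<forall>f \<in># Sm. is_boxed f \<Longrightarrow> gKTp Sm (Gm + {#Atom p#}) ({#Atom p#} + Dm)"
| axBot: "\<forall>f \<in># Sm. is_boxed f \<Longrightarrow> gKTp Sm ({#Bot#} + Gm) Dm"
| RConj: "gKTp Sm Gm (Dm + {#a1#}) \<Longrightarrow> gKTp Sm Gm (Dm + {#a2#}) \<Longrightarrow> gKTp Sm Gm (Dm + {#Conj a1 a2#})"
| LConj: "gKTp Sm ({#a1, a2#} + Gm) Dm \<Longrightarrow> gKTp Sm ({#Conj a1 a2#} + Gm) Dm"
| RDisj: "gKTp Sm Gm (Dm + {#a1, a2#}) \<Longrightarrow> gKTp Sm Gm (Dm + {#Disj a1 a2#})"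
| LDisj: "gKTp Sm ({#a1#} + Gm) Dm \<Longrightarrow> gKTp Sm ({#a2#} + Gm) Dm \<Longrightarrow> gKTp Sm ({#Disj a1 a2#} + Gm) Dm"
| RImp: "gKTp Sm ({#a1#} + Gm) (Dm + {#a2#}) \<Longrightarrow> gKTp Sm Gm (Dm + {#Imp a1 a2#})"
| LImp: "gKTp Sm Gm (Dm + {#a1#}) \<Longrightarrow> gKTp Sm ({#a2#} + Gm) Dm \<Longrightarrow> gKTp Sm ({#Imp a1 a2#} + Gm) Dm"
| RNeg: "gKTp Sm ({#a#} + Gm) Dm \<Longrightarrow> gKTp Sm Gm (Dm + {#Neg a#})"
| LNeg: "gKTp Sm Gm (Dm + {#a#}) \<Longrightarrow> gKTp Sm ({#Neg a#} + Gm) Dm"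
| DKp: "gKTp {#} (mset (map snd xs)) {#b#} \<Longrightarrow>
       (\<forall>(H, a) \<in> set xs. gset H \<subseteq> gset G) \<Longrightarrow>
       (\<forall>f \<in># Sm. boxed_other G f) \<Longrightarrow>
       (\<forall>f \<in># Pm. is_atom_or_bot f) \<Longrightarrow>
       (\<forall>f \<in># Om. omega_ok f) \<Longrightarrow>
       gKTp (Sm + mset (map (\<lambda>(H, a). Box H a) xs)) Pm ({#Box G b#} + Om)"
| DTp: "gKTp ({#Box G a#} + Sm) ({#a#} + Gm) Dm \<Longrightarrow> gKTp Sm ({#Box G a#} + Gm) Dm"

end

theory Submission
  imports Defs
begin

(* Reading a T-sequent \<Sigma> | \<Gamma> \<Rightarrow> \<Delta> as \<Sigma>, \<Gamma> \<Rightarrow> \<Delta> turns every rule of G(KT^+_D) into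
   an instance of the corresponding rule of G(KT_D).

   For the converse we avoid proving weakening and contraction admissible in G(KT^+_D).
   A T-sequent covers \<Gamma> \<Rightarrow> \<Delta> if every formula of \<Gamma> (of \<Delta>) is recovered from it by reading
   left (right) rules backwards, where a boxed formula on the left counts as recovered when
   it lies in \<Sigma> and its body is recovered. Backward rule applications reduce derivability of
   a T-sequent to that of its decomposed covers, in which \<Gamma> holds only atoms and \<bottom> and \<Delta>
   only atoms, \<bottom> and boxed formulas. A decomposed cover of a G(KT_D)-derivable \<Gamma> \<Rightarrow> \<Delta> is
   derivable by induction on the derivation: the cover selects a premise of the last rule
   that it covers again, and at a (D_K) step the bodies of the boxes in \<Sigma> cover the premise. *)

fun covered_ant covered_suc ::
  "('a, 'p) fm multiset \<Rightarrow> ('a, 'p) fm multiset \<Rightarrow> ('a, 'p) fm multiset \<Rightarrow> ('a, 'p) fm \<Rightarrow> bool"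
where
  "covered_ant S G D (Conj a b) \<longleftrightarrow> Conj a b \<in># G \<or> covered_ant S G D a \<and> covered_ant S G D b"
| "covered_ant S G D (Disj a b) \<longleftrightarrow> Disj a b \<in># G \<or> covered_ant S G D a \<or> covered_ant S G D b"
| "covered_ant S G D (Imp a b) \<longleftrightarrow> Imp a b \<in># G \<or> covered_suc S G D a \<or> covered_ant S G D b"
| "covered_ant S G D (Neg a) \<longleftrightarrow> Neg a \<in># G \<or> covered_suc S G D a"
| "covered_ant S G D (Box H a) \<longleftrightarrow> Box H a \<in># G \<or> Box H a \<in># S \<and> covered_ant S G D a"
| "covered_ant S G D f \<longleftrightarrow> f \<in># G"
| "covered_suc S G D (Conj a b) \<longleftrightarrow> Conj a b \<in># D \<or> covered_suc S G D a \<or> covered_suc S G D b"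
| "covered_suc S G D (Disj a b) \<longleftrightarrow> Disj a b \<in># D \<or> covered_suc S G D a \<and> covered_suc S G D b"
| "covered_suc S G D (Imp a b) \<longleftrightarrow> Imp a b \<in># D \<or> covered_ant S G D a \<and> covered_suc S G D b"
| "covered_suc S G D (Neg a) \<longleftrightarrow> Neg a \<in># D \<or> covered_ant S G D a"
| "covered_suc S G D f \<longleftrightarrow> f \<in># D"

lemma covered_if_member:
  shows "f \<in># G \<Longrightarrow> covered_ant S G D f" and "f \<in># D \<Longrightarrow> covered_suc S G D f"
  by (cases f; simp)+

definition covers ::
  "('a, 'p) fm multiset \<Rightarrow> ('a, 'p) fm multiset \<Rightarrow> ('a, 'p) fm multiset \<Rightarrow>
   ('a, 'p) fm multiset \<Rightarrow> ('a, 'p) fm multiset \<Rightarrow> ('a, 'p) fm multiset \<Rightarrow> bool"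
where
  "covers S' G' D' S G D \<longleftrightarrow> set_mset S \<subseteq> set_mset S' \<and>
     (\<forall>f\<in>#G. covered_ant S' G' D' f) \<and> (\<forall>f\<in>#D. covered_suc S' G' D' f)"

definition decomposed ::
  "('a, 'p) fm multiset \<Rightarrow> ('a, 'p) fm multiset \<Rightarrow> ('a, 'p) fm multiset \<Rightarrow> bool"
where
  "decomposed S G D \<longleftrightarrow> (\<forall>f\<in>#S. is_boxed f) \<and> (\<forall>f\<in>#G. is_atom_or_bot f) \<and> (\<forall>f\<in>#D. omega_ok f)"

lemma covered_mono:
  assumes "covers S' G' D' S G D"
  shows "covered_ant S G D f \<Longrightarrow> covered_ant S' G' D' f"
    and "covered_suc S G D f \<Longrightarrow> covered_suc S' G' D' f"
  using assms by (induction f) (auto simp: covers_def)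

lemma covers_refl: "covers S G D S G D"
  by (simp add: covers_def covered_if_member)

lemma covers_trans:
  assumes "covers S2 G2 D2 S1 G1 D1" and "covers S1 G1 D1 S0 G0 D0"
  shows "covers S2 G2 D2 S0 G0 D0"
  using assms(2) covered_mono[OF assms(1)] assms(1) by (auto simp: covers_def)

lemma gKTp_decompose_ant:
  assumes f: "\<not> is_atom_or_bot f" and S: "\<forall>x\<in>#S. is_boxed x"
    and IH: "\<And>S' G' D'. (\<Sum>x\<in>#G' + D'. size x) < (\<Sum>x\<in>#add_mset f G + D. size x) \<Longrightarrow>
      \<forall>x\<in>#S'. is_boxed x \<Longrightarrow> covers S' G' D' S (add_mset f G) D \<Longrightarrow> gKTp S' G' D'"
  shows "gKTp S (add_mset f G) D"
proof (cases f)
  case (Conj a b)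
  have "gKTp S (add_mset a (add_mset b G)) D"
    by (rule IH) (use S Conj in \<open>auto simp: covers_def covered_if_member\<close>)
  then show ?thesis using Conj gKTp.LConj[simplified] by blast
next
  case (Disj a b)
  have "gKTp S (add_mset a G) D" and "gKTp S (add_mset b G) D"
    by (rule IH; use S Disj in \<open>auto simp: covers_def covered_if_member\<close>)+
  then show ?thesis using Disj gKTp.LDisj[simplified] by blast
next
  case (Imp a b)
  have "gKTp S G (add_mset a D)" and "gKTp S (add_mset b G) D"
    by (rule IH; use S Imp in \<open>auto simp: covers_def covered_if_member\<close>)+
  then show ?thesis using Imp gKTp.LImp[simplified] by blast
next
  case (Neg a)
  have "gKTp S G (add_mset a D)"
    by (rule IH) (use S Neg in \<open>auto simp: covers_def covered_if_member\<close>)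
  then show ?thesis using Neg gKTp.LNeg[simplified] by blast
next
  case (Box H a)
  have "gKTp (add_mset (Box H a) S) (add_mset a G) D"
    by (rule IH) (use S Box in \<open>auto simp: covers_def covered_if_member\<close>)
  then show ?thesis using Box gKTp.DTp[simplified] by blast
qed (use f in auto)

lemma gKTp_decompose_suc:
  assumes f: "\<not> omega_ok f"
    and IH: "\<And>G' D'. (\<Sum>x\<in>#G' + D'. size x) < (\<Sum>x\<in>#G + add_mset f D. size x) \<Longrightarrow>
      covers S G' D' S G (add_mset f D) \<Longrightarrow> gKTp S G' D'"
  shows "gKTp S G (add_mset f D)"
proof (cases f)
  case (Conj a b)
  have "gKTp S G (add_mset a D)" and "gKTp S G (add_mset b D)"
    by (rule IH; use Conj in \<open>auto simp: covers_def covered_if_member\<close>)+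
  then show ?thesis using Conj gKTp.RConj[simplified] by blast
next
  case (Disj a b)
  have "gKTp S G (add_mset a (add_mset b D))"
    by (rule IH) (use Disj in \<open>auto simp: covers_def covered_if_member\<close>)
  then show ?thesis using Disj gKTp.RDisj[simplified] by blast
next
  case (Imp a b)
  have "gKTp S (add_mset a G) (add_mset b D)"
    by (rule IH) (use Imp in \<open>auto simp: covers_def covered_if_member\<close>)
  then show ?thesis using Imp gKTp.RImp[simplified] by blast
next
  case (Neg a)
  have "gKTp S (add_mset a G) D"
    by (rule IH) (use Neg in \<open>auto simp: covers_def covered_if_member\<close>)
  then show ?thesis using Neg gKTp.RNeg[simplified] by blast
qed (use f in \<open>auto simp: omega_ok_def\<close>)

lemma gKTp_by_decomposition:
  assumes "\<forall>f\<in>#S. is_boxed f"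
    and "\<And>S' G' D'. decomposed S' G' D' \<Longrightarrow> covers S' G' D' S G D \<Longrightarrow> gKTp S' G' D'"
  shows "gKTp S G D"
  using assms
proof (induction "\<Sum>x\<in>#G + D. size x" arbitrary: S G D rule: less_induct)
  case less
  have IH: "gKTp S' G' D'" if "(\<Sum>x\<in>#G' + D'. size x) < (\<Sum>x\<in>#G + D. size x)"
    "\<forall>x\<in>#S'. is_boxed x" "covers S' G' D' S G D" for S' G' D'
    using less.hyps[OF that(1,2)] less.prems(2) covers_trans[OF _ that(3)] by blast
  consider "decomposed S G D"
    | f G0 where "G = add_mset f G0" "\<not> is_atom_or_bot f"
    | f D0 where "D = add_mset f D0" "\<not> omega_ok f"
    using less.prems(1) unfolding decomposed_def by (metis multi_member_split)
  then show ?case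
  proof cases
    case 1
    then show ?thesis using less.prems(2) covers_refl by blast
  next
    case (2 f G0)
    then show ?thesis using gKTp_decompose_ant[where f = f and G = G0] IH less.prems(1) by blast
  next
    case (3 f D0)
    then show ?thesis using gKTp_decompose_suc[where f = f and D = D0] IH less.prems(1) by blast
  qed
qed

lemma gKTp_axiom_member: "\<forall>f\<in>#S. is_boxed f \<Longrightarrow> Atom p \<in># G \<Longrightarrow> Atom p \<in># D \<Longrightarrow> gKTp S G D"
  by (metis gKTp.ax[simplified] multi_member_split)

lemma gKTp_bot_member: "\<forall>f\<in>#S. is_boxed f \<Longrightarrow> Bot \<in># G \<Longrightarrow> gKTp S G D"
  by (metis gKTp.axBot[simplified] multi_member_split)

lemma boxed_mset_eq_boxes:
  "\<forall>f\<in>#B. is_boxed f \<Longrightarrow> \<exists>xs. B = mset (map (\<lambda>(H, a). Box H a) xs)"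
proof (induction B)
  case (add f B)
  then obtain xs H a where "B = mset (map (\<lambda>(H, a). Box H a) xs)" "f = Box H a"
    by (cases f) auto
  then show ?case by (intro exI[of _ "(H, a) # xs"]) simp
qed simp

lemma gKTp_DKp_decomposed:
  assumes dec: "decomposed S G D" and box: "Box Gr b \<in># D"
    and body: "\<And>xs. S = filter_mset (boxed_other Gr) S + mset (map (\<lambda>(H, a). Box H a) xs) \<Longrightarrow>
      \<forall>(H, a)\<in>set xs. gset H \<subseteq> gset Gr \<Longrightarrow> gKTp {#} (mset (map snd xs)) {#b#}"
  shows "gKTp S G D"
proof -
  define B where "B = filter_mset (\<lambda>f. \<not> boxed_other Gr f) S"
  have "\<forall>f\<in>#B. is_boxed f" using dec by (simp add: B_def decomposed_def)
  then obtain xs where xs: "B = mset (map (\<lambda>(H, a). Box H a) xs)"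
    using boxed_mset_eq_boxes by blast
  have S: "S = filter_mset (boxed_other Gr) S + mset (map (\<lambda>(H, a). Box H a) xs)"
    unfolding xs[symmetric] B_def by (rule multiset_partition)
  have "\<forall>(H, a)\<in>set xs. Box H a \<in># B" by (force simp: xs)
  then have groups: "\<forall>(H, a)\<in>set xs. gset H \<subseteq> gset Gr" by (auto simp: B_def)
  have D: "D = add_mset (Box Gr b) (D - {#Box Gr b#})" using box by simp
  have "gKTp (filter_mset (boxed_other Gr) S + mset (map (\<lambda>(H, a). Box H a) xs)) G
      ({#Box Gr b#} + (D - {#Box Gr b#}))"
    by (rule gKTp.DKp[OF body[OF S groups] groups])
      (use dec in \<open>auto simp: decomposed_def dest: in_diffD\<close>)
  then show ?thesis using S D by simp
qed

lemma gKTp_if_gKT_covered: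
  "gKT G D \<Longrightarrow> decomposed S' G' D' \<Longrightarrow> covers S' G' D' {#} G D \<Longrightarrow> gKTp S' G' D'"
proof (induction arbitrary: S' G' D' rule: gKT.induct)
  case (ax Gm p Dm)
  then show ?case by (intro gKTp_axiom_member[of _ p]) (auto simp: covers_def decomposed_def)
next
  case (axBot Gm Dm)
  then show ?case by (intro gKTp_bot_member) (auto simp: covers_def decomposed_def)
next
  case (DK xs b Gr Sm Om)
  have "Box Gr b \<in># D'" using DK.prems by (simp add: covers_def)
  then show ?case
  proof (rule gKTp_DKp_decomposed[OF DK.prems(1)])
    fix ys assume S': "S' = filter_mset (boxed_other Gr) S' + mset (map (\<lambda>(H, a). Box H a) ys)"
    have "snd ` set xs \<subseteq> snd ` set ys"
    proof
      fix a assume "a \<in> snd ` set xs"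
      then obtain H where Ha: "(H, a) \<in> set xs" by force
      then have "Box H a \<in># Sm + mset (map (\<lambda>(H, a). Box H a) xs)" by force
      then have "covered_ant S' G' D' (Box H a)" using DK.prems(2) unfolding covers_def by blast
      moreover have "Box H a \<notin># G'" using DK.prems(1) by (auto simp: decomposed_def)
      moreover have "\<not> boxed_other Gr (Box H a)" using DK.hyps(2) Ha by auto
      ultimately have "Box H a \<in># mset (map (\<lambda>(H, a). Box H a) ys)"
        by (subst (asm) S') auto
      then show "a \<in> snd ` set ys" by force
    qed
    then have "set_mset (mset (map snd xs)) \<subseteq> set_mset (mset (map snd ys))" by simp
    then have covers_body: "covers S'' G'' D'' {#} (mset (map snd xs)) {#b#}"
      if "covers S'' G'' D'' {#} (mset (map snd ys)) {#b#}" for S'' G'' D''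
      using that unfolding covers_def by blast
    show "gKTp {#} (mset (map snd ys)) {#b#}"
    proof (rule gKTp_by_decomposition)
      fix S'' G'' D''
      assume "decomposed S'' G'' D''" and "covers S'' G'' D'' {#} (mset (map snd ys)) {#b#}"
      then show "gKTp S'' G'' D''" using DK.IH covers_body by blast
    qed simp
  qed
qed (auto simp: covers_def decomposed_def omega_ok_def)

lemma gKT_if_gKTp: "gKTp S G D \<Longrightarrow> gKT (S + G) D"
proof (induction rule: gKTp.induct)
  case (DKp xs b Gr Sm Pm Om)
  have "sigma_ok Gr f" if "f \<in># Sm + Pm" for f
    using that DKp.hyps(3,4) by (cases f) auto
  then have "gKT (Sm + Pm + mset (map (\<lambda>(H, a). Box H a) xs)) ({#Box Gr b#} + Om)"
    using DKp.IH DKp.hyps(2,5) by (intro gKT.DK) auto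
  then show ?case by (simp add: ac_simps)
next
  case (DTp Gr a Sm Gm Dm)
  then show ?case using gKT.DT[of Gr a "Sm + Gm" Dm] by (simp add: add_mset_commute)
qed (auto intro: gKT.intros[simplified])

theorem lemma6p14:
  fixes Gm Dm :: "('a::finite, 'p::countable) fm multiset"
  shows "gKT Gm Dm \<longleftrightarrow> gKTp {#} Gm Dm"
proof
  assume "gKT Gm Dm"
  show "gKTp {#} Gm Dm"
  proof (rule gKTp_by_decomposition)
    fix S G D assume "decomposed S G D" and "covers S G D {#} Gm Dm"
    with \<open>gKT Gm Dm\<close> show "gKTp S G D" by (rule gKTp_if_gKT_covered)
  qed simp
next
  assume "gKTp {#} Gm Dm"
  then show "gKT Gm Dm" using gKT_if_gKTp by fastforce
qed

end
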